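(* Let $\Gamma$ be the graph with vertex set $\{v_{n,k}: n\in\mathbb Z,\ k\in\mathbb Z/10\mathbb Z\}$ and edge set $\{v_{n,k}v_{n,k+1}: n\in\mathbb Z, k\in\mathbb Z/10\mathbb Z\}\cup\{v_{n,2k+1}v_{n+1,4k+2}: n\in\mathbb Z, k\in\mathbb Z/10\mathbb Z\}$. Then $\Gamma$ is a cubic (3-regular), 2-ended, vertex-transitive graph which is not a Cayley graph (i.e. no subgroup of $\mathrm{Aut}(\Gamma)$ acts regularly on $V(\Gamma)$). In particular, there exists a cubic 2-ended vertex-transitive graph which is not a Cayley graph.
   Context: Indices $k$ are taken modulo 10. A graph is 2-ended if it has exactly two ends (equivalently here, it is quasi-isometric to $\mathbb Z$). *)

theory Defs
  imports Main "HOL-Library.Numeral_Type"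
begin

definition simple_graph :: "('a \<Rightarrow> 'a \<Rightarrow> bool) \<Rightarrow> bool" where
  "simple_graph E \<longleftrightarrow> (\<forall>x y. E x y \<longrightarrow> E y x) \<and> (\<forall>x. \<not> E x x)"

definition cubic :: "('a \<Rightarrow> 'a \<Rightarrow> bool) \<Rightarrow> bool" where
  "cubic E \<longleftrightarrow> (\<forall>v. card {w. E v w} = 3)"

definition graph_connected :: "('a \<Rightarrow> 'a \<Rightarrow> bool) \<Rightarrow> bool" where
  "graph_connected E \<longleftrightarrow> (\<forall>u v. E\<^sup>*\<^sup>* u v)"

definition comps_minus :: "('a \<Rightarrow> 'a \<Rightarrow> bool) \<Rightarrow> 'a set \<Rightarrow> 'a set set" where
  "comps_minus E S =
     {{v. (\<lambda>x y. E x y \<and> x \<notin> S \<and> y \<notin> S)\<^sup>*\<^sup>* u v} | u. u \<notin> S}"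

definition inf_comps_minus :: "('a \<Rightarrow> 'a \<Rightarrow> bool) \<Rightarrow> 'a set \<Rightarrow> 'a set set" where
  "inf_comps_minus E S = {C \<in> comps_minus E S. infinite C}"

text \<open>A connected locally finite graph has exactly two ends iff removing a finite set of
vertices never leaves more than two infinite components, and some finite set leaves exactly two.\<close>
definition two_ended :: "('a \<Rightarrow> 'a \<Rightarrow> bool) \<Rightarrow> bool" where
  "two_ended E \<longleftrightarrow> graph_connected E \<and>
     (\<forall>S. finite S \<longrightarrow> finite (inf_comps_minus E S) \<and> card (inf_comps_minus E S) \<le> 2) \<and>
     (\<exists>S. finite S \<and> card (inf_comps_minus E S) = 2)"

definition graph_aut :: "('a \<Rightarrow> 'a \<Rightarrow> bool) \<Rightarrow> ('a \<Rightarrow> 'a) \<Rightarrow> bool" where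
  "graph_aut E f \<longleftrightarrow> bij f \<and> (\<forall>x y. E (f x) (f y) \<longleftrightarrow> E x y)"

definition vertex_transitive :: "('a \<Rightarrow> 'a \<Rightarrow> bool) \<Rightarrow> bool" where
  "vertex_transitive E \<longleftrightarrow> (\<forall>u v. \<exists>f. graph_aut E f \<and> f u = v)"

definition aut_subgroup :: "('a \<Rightarrow> 'a \<Rightarrow> bool) \<Rightarrow> ('a \<Rightarrow> 'a) set \<Rightarrow> bool" where
  "aut_subgroup E H \<longleftrightarrow> (\<forall>h\<in>H. graph_aut E h) \<and> id \<in> H \<and>
     (\<forall>g\<in>H. \<forall>h\<in>H. g \<circ> h \<in> H) \<and> (\<forall>h\<in>H. inv h \<in> H)"

definition acts_regularly :: "('a \<Rightarrow> 'a) set \<Rightarrow> bool" where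
  "acts_regularly H \<longleftrightarrow> (\<forall>u v. \<exists>!h. h \<in> H \<and> h u = v)"

definition cayley_graph :: "('a \<Rightarrow> 'a \<Rightarrow> bool) \<Rightarrow> bool" where
  "cayley_graph E \<longleftrightarrow> (\<exists>H. aut_subgroup E H \<and> acts_regularly H)"

text \<open>The graph Gamma: vertex (n,k) is v_{n,k}, with k in Z/10Z.\<close>
definition Gamma :: "int \<times> 10 \<Rightarrow> int \<times> 10 \<Rightarrow> bool" where
  "Gamma x y \<longleftrightarrow>
     (fst y = fst x \<and> (snd y = snd x + 1 \<or> snd x = snd y + 1)) \<or>
     (\<exists>k::10. (fst y = fst x + 1 \<and> snd x = 2*k+1 \<and> snd y = 4*k+2) \<or>
              (fst x = fst y + 1 \<and> snd y = 2*k+1 \<and> snd x = 4*k+2))"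

end

theory Submission
  imports Defs "HOL-Library.Infinite_Set"
begin

text \<open>
  \<open>\<Gamma>\<close> is a \<open>\<int>\<close>-indexed stack of 10-cycles whose vertices are matched by rungs between
  adjacent layers, so it is cubic and, having finite connected layers, two-ended. Twisted
  translations (shifting layer \<open>n\<close> by an even amount that doubles from one layer to the next)
  together with a layer-reversing flip act transitively on the vertices.

  Rigidity comes from counting 8-cycles: a path made of two cycle edges lies on at least three
  8-cycles, a path made of a rung and a cycle edge on only two, so every automorphism maps rungs
  to rungs. A subgroup acting regularly would contain the element \<open>g\<close> sending \<open>(0, 0)\<close> to its
  rung neighbour \<open>(-1, 5)\<close>; preserving rungs, \<open>g\<close> swaps these two vertices, so
  regularity forces \<open>g\<^sup>2 = 1\<close>. Following \<open>g\<close> along the 10-cycle of layer 0 and one rung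
  contradicts this.
\<close>

lemma graph_aut_comp: "graph_aut E f \<Longrightarrow> graph_aut E g \<Longrightarrow> graph_aut E (f \<circ> g)"
  by (simp add: graph_aut_def bij_comp)

lemma graph_aut_inv: assumes "graph_aut E f" shows "graph_aut E (inv f)"
proof -
  have f: "bij f" "\<And>x y. E (f x) (f y) \<longleftrightarrow> E x y" using assms by (auto simp: graph_aut_def)
  have "E (inv f x) (inv f y) \<longleftrightarrow> E x y" for x y
    using f by (metis bij_inv_eq_iff)
  then show ?thesis using f bij_imp_bij_inv by (simp add: graph_aut_def)
qed

lemma graph_autI_neighbourhoods:
  assumes "bij f" and "\<And>x. f ` {y. E x y} = {y. E (f x) y}"
  shows "graph_aut E f"
proof -
  have "E (f x) (f y) \<longleftrightarrow> f y \<in> f ` {y. E x y}" for x y using assms(2) by simp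
  then have "E (f x) (f y) \<longleftrightarrow> E x y" for x y
    using bij_is_inj[OF assms(1)] by (simp add: inj_image_mem_iff)
  then show ?thesis using assms(1) by (simp add: graph_aut_def)
qed

lemma graph_aut_image_neighbourhood:
  assumes "graph_aut E f" shows "f ` {y. E x y} = {y. E (f x) y}"
proof -
  have "bij f" "\<And>x y. E (f x) (f y) \<longleftrightarrow> E x y" using assms by (auto simp: graph_aut_def)
  then show ?thesis by (auto simp: image_iff) (metis bij_pointE)
qed

lemma vertex_transitiveI_base:
  assumes "\<And>v. \<exists>f. graph_aut E f \<and> f v0 = v"
  shows "vertex_transitive E"
  unfolding vertex_transitive_def
proof (intro allI)
  fix u v
  obtain f g where f: "graph_aut E f" "f v0 = u" and g: "graph_aut E g" "g v0 = v"
    using assms by metis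
  have "inv f u = v0" using f by (metis bij_inv_eq_iff graph_aut_def)
  then show "\<exists>h. graph_aut E h \<and> h u = v"
    using f g by (intro exI[of _ "g \<circ> inv f"]) (simp add: graph_aut_comp graph_aut_inv)
qed

lemma acts_regularly_swap_involution:
  assumes "aut_subgroup E H" "acts_regularly H" "g \<in> H" "g (g u) = u"
  shows "g (g x) = x"
proof -
  have "g \<circ> g \<in> H" "id \<in> H" using assms(1,3) by (simp_all add: aut_subgroup_def)
  then have "g \<circ> g = id"
    using assms(2,4) unfolding acts_regularly_def by (metis comp_apply id_apply)
  then show ?thesis by (metis comp_apply id_apply)
qed

definition octagons :: "('a \<Rightarrow> 'a \<Rightarrow> bool) \<Rightarrow> 'a \<Rightarrow> 'a \<Rightarrow> 'a \<Rightarrow> ('a \<times> 'a \<times> 'a \<times> 'a \<times> 'a) set" where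
  "octagons E a b c = {(w1, w2, w3, w4, w5). distinct [a, b, c, w1, w2, w3, w4, w5] \<and>
     E a b \<and> E b c \<and> E c w1 \<and> E w1 w2 \<and> E w2 w3 \<and> E w3 w4 \<and> E w4 w5 \<and> E w5 a}"

definition three_octagons :: "('a \<Rightarrow> 'a \<Rightarrow> bool) \<Rightarrow> 'a \<Rightarrow> 'a \<Rightarrow> 'a \<Rightarrow> bool" where
  "three_octagons E a b c \<longleftrightarrow> (\<exists>W \<subseteq> octagons E a b c. card W = 3)"

definition map5 :: "('a \<Rightarrow> 'b) \<Rightarrow> 'a \<times> 'a \<times> 'a \<times> 'a \<times> 'a \<Rightarrow> 'b \<times> 'b \<times> 'b \<times> 'b \<times> 'b" where
  "map5 f = (\<lambda>(w1, w2, w3, w4, w5). (f w1, f w2, f w3, f w4, f w5))"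

lemma inj_map5: "inj f \<Longrightarrow> inj (map5 f)"
  by (auto simp: inj_def map5_def)

lemma map5_octagons_subset:
  assumes f: "graph_aut E f"
  shows "map5 f ` octagons E a b c \<subseteq> octagons E (f a) (f b) (f c)"
proof -
  have inj: "inj f" and edge: "\<And>x y. E (f x) (f y) \<longleftrightarrow> E x y"
    using f by (auto simp: graph_aut_def bij_def)
  show ?thesis by (auto simp: octagons_def map5_def edge inj_eq[OF inj])
qed

lemma three_octagons_graph_aut:
  assumes f: "graph_aut E f" and "three_octagons E a b c"
  shows "three_octagons E (f a) (f b) (f c)"
proof -
  obtain W where W: "W \<subseteq> octagons E a b c" "card W = 3"
    using assms(2) by (auto simp: three_octagons_def)
  have "inj (map5 f)" using f by (simp add: graph_aut_def bij_is_inj inj_map5)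
  then have "card (map5 f ` W) = 3" using W(2) by (simp add: card_image inj_on_subset)
  moreover have "map5 f ` W \<subseteq> octagons E (f a) (f b) (f c)"
    using W(1) map5_octagons_subset[OF f] by blast
  ultimately show ?thesis by (auto simp: three_octagons_def)
qed

definition delete_vertices :: "('a \<Rightarrow> 'a \<Rightarrow> bool) \<Rightarrow> 'a set \<Rightarrow> 'a \<Rightarrow> 'a \<Rightarrow> bool" where
  "delete_vertices E S = (\<lambda>x y. E x y \<and> x \<notin> S \<and> y \<notin> S)"

lemma comps_minus_delete_vertices:
  "comps_minus E S = {{v. (delete_vertices E S)\<^sup>*\<^sup>* u v} | u. u \<notin> S}"
  by (simp add: comps_minus_def delete_vertices_def)

lemma symp_delete_vertices: "symp E \<Longrightarrow> symp (delete_vertices E S)"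
  by (auto simp: symp_def delete_vertices_def)

locale layered_graph =
  fixes E :: "int \<times> 'b::finite \<Rightarrow> int \<times> 'b \<Rightarrow> bool"
  assumes sym: "symp E"
    and local: "\<And>x y. E x y \<Longrightarrow> \<bar>fst y - fst x\<bar> \<le> 1"
    and layer_connected: "\<And>n k k'. (\<lambda>x y. E x y \<and> fst x = n \<and> fst y = n)\<^sup>*\<^sup>* (n, k) (n, k')"
    and layers_linked: "\<And>n. \<exists>k k'. E (n, k) (n + 1, k')"
begin

abbreviation "reachable_off S \<equiv> (delete_vertices E S)\<^sup>*\<^sup>*"

lemma reachable_off_sym: "reachable_off S x y \<Longrightarrow> reachable_off S y x"
  using symp_rtranclp[OF symp_delete_vertices[OF sym]] by (rule sympD)

lemma walk_in_layer:
  assumes "\<forall>k. (n, k) \<notin> S" shows "reachable_off S (n, k) (n, k')"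
proof -
  have "(\<lambda>x y. E x y \<and> fst x = n \<and> fst y = n) \<le> delete_vertices E S"
    using assms by (auto simp: delete_vertices_def)
  then show ?thesis using layer_connected rtranclp_mono by blast
qed

lemma walk_up:
  assumes "\<forall>m k. n \<le> m \<and> m \<le> n + int d \<longrightarrow> (m, k) \<notin> S"
  shows "reachable_off S (n, k) (n + int d, k')"
  using assms
proof (induction d arbitrary: k')
  case 0
  then show ?case using walk_in_layer[of n S] by simp
next
  case (Suc d)
  obtain j j' where link: "E (n + int d, j) (n + int d + 1, j')" using layers_linked by blast
  have "reachable_off S (n, k) (n + int d, j)" using Suc by simp
  moreover have "delete_vertices E S (n + int d, j) (n + int (Suc d), j')"
    using link Suc.prems by (simp add: delete_vertices_def ac_simps)
  moreover have "reachable_off S (n + int (Suc d), j') (n + int (Suc d), k')"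
    using walk_in_layer Suc.prems by simp
  ultimately show ?case by (meson rtranclp.rtrancl_into_rtrancl rtranclp_trans)
qed

lemma walk_between_free_layers:
  assumes "\<forall>x\<in>S. fst x \<notin> {min n n'..max n n'}"
  shows "reachable_off S (n, k) (n', k')"
proof -
  have free: "(m, j) \<notin> S" if "min n n' \<le> m" "m \<le> max n n'" for m j
    using assms that by force
  have d: "min n n' + int (nat (max n n' - min n n')) = max n n'" by simp
  have "reachable_off S (min n n', j) (max n n', j')" for j j'
    using walk_up[of "min n n'" "nat (max n n' - min n n')" S j j'] free unfolding d by blast
  then show ?thesis by (cases "n \<le> n'") (auto intro: reachable_off_sym)
qed

lemma connected: "graph_connected E"
proof -
  have "reachable_off {} u v" for u v
    using walk_between_free_layers[of "{}" "fst u" "fst v" "snd u" "snd v"] by simp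
  moreover have "delete_vertices E {} = E" by (simp add: delete_vertices_def)
  ultimately show ?thesis by (simp add: graph_connected_def)
qed

lemma infinite_comps_subset:
  assumes bound: "\<forall>x\<in>S. \<bar>fst x\<bar> \<le> N"
  shows "inf_comps_minus E S \<subseteq> {{v. reachable_off S (N + 1, k) v}, {v. reachable_off S (- N - 1, k) v}}"
proof
  fix C assume "C \<in> inf_comps_minus E S"
  then obtain u where C: "C = {v. reachable_off S u v}" and inf: "infinite C"
    by (auto simp: inf_comps_minus_def comps_minus_delete_vertices)
  have "finite ({-N..N} \<times> (UNIV :: 'b set))" by simp
  then have "\<not> C \<subseteq> {-N..N} \<times> (UNIV :: 'b set)" using inf finite_subset by metis
  then obtain x where x: "x \<in> C" "x \<notin> {-N..N} \<times> (UNIV :: 'b set)" by auto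
  have "reachable_off S x (N + 1, k) \<or> reachable_off S x (- N - 1, k)"
  proof (cases "fst x > N")
    case True
    then have "reachable_off S (fst x, snd x) (N + 1, k)"
      using bound by (intro walk_between_free_layers) (auto simp: abs_le_iff)
    then show ?thesis by simp
  next
    case False
    then have "fst x < - N" using x(2) by (cases x) auto
    then have "reachable_off S (fst x, snd x) (- N - 1, k)"
      using bound by (intro walk_between_free_layers) (auto simp: abs_le_iff)
    then show ?thesis by simp
  qed
  then obtain v where v: "v = (N + 1, k) \<or> v = (- N - 1, k)" "reachable_off S x v" by blast
  have "reachable_off S u x" using x C by simp
  then have uv: "reachable_off S u v" using v(2) by (rule rtranclp_trans)
  then have vu: "reachable_off S v u" by (rule reachable_off_sym)
  have "reachable_off S u w \<longleftrightarrow> reachable_off S v w" for w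
    using rtranclp_trans[OF uv] rtranclp_trans[OF vu] by blast
  then have "C = {w. reachable_off S v w}" using C by simp
  then show "C \<in> {{v. reachable_off S (N + 1, k) v}, {v. reachable_off S (- N - 1, k) v}}"
    using v(1) by blast
qed

lemma finitely_many_infinite_comps:
  assumes "finite S"
  shows "finite (inf_comps_minus E S) \<and> card (inf_comps_minus E S) \<le> 2"
proof -
  obtain N where "\<forall>x\<in>S. \<bar>fst x\<bar> \<le> N"
    using assms by (metis Max_ge finite_imageI image_eqI)
  then have sub: "inf_comps_minus E S \<subseteq> {{v. reachable_off S (N + 1, k) v}, {v. reachable_off S (- N - 1, k) v}}"
    for k by (rule infinite_comps_subset)
  then have "finite (inf_comps_minus E S)" by (rule finite_subset) simp
  moreover have "card (inf_comps_minus E S) \<le> 2"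
    using card_mono[OF _ sub] by (rule order_trans) (simp_all add: card_insert_if)
  ultimately show ?thesis by blast
qed

lemma deleting_a_layer_leaves_two_infinite_comps:
  "card (inf_comps_minus E ({0} \<times> UNIV)) = 2"
proof -
  let ?S = "{0::int} \<times> (UNIV :: 'b set)"
  fix k :: 'b
  define A where "A = {v. reachable_off ?S (1, k) v}"
  define B where "B = {v. reachable_off ?S (- 1, k) v}"
  have "reachable_off ?S (1, k) (1 + int i, k)" "reachable_off ?S (- 1, k) (- 1 - int i, k)" for i :: nat
    by (auto intro!: walk_between_free_layers)
  then have "range (\<lambda>i::nat. (1 + int i, k)) \<subseteq> A" "range (\<lambda>i::nat. (- 1 - int i, k)) \<subseteq> B"
    by (auto simp: A_def B_def)
  moreover have "infinite (range (\<lambda>i::nat. (1 + int i, k)))" "infinite (range (\<lambda>i::nat. (- 1 - int i, k)))"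
    by (auto intro!: range_inj_infinite simp: inj_def)
  ultimately have "infinite A" "infinite B" by (simp_all add: infinite_super)
  moreover have "A \<in> comps_minus E ?S" "B \<in> comps_minus E ?S"
    unfolding comps_minus_delete_vertices A_def B_def
    by (intro CollectI exI[of _ "(1, k)"]; simp) (intro CollectI exI[of _ "(- 1, k)"]; simp)
  ultimately have AB: "A \<in> inf_comps_minus E ?S" "B \<in> inf_comps_minus E ?S"
    by (simp_all add: inf_comps_minus_def)
  have positive: "reachable_off ?S (1, k) v \<Longrightarrow> fst v > 0" for v
  proof (induction rule: rtranclp_induct)
    case (step y z)
    then show ?case using local[of y z] by (auto simp: delete_vertices_def mem_Times_iff)
  qed simp
  then have "(- 1, k) \<notin> A" by (fastforce simp: A_def)
  moreover have "(- 1, k) \<in> B" by (simp add: B_def)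
  ultimately have "A \<noteq> B" by blast
  moreover have "inf_comps_minus E ?S \<subseteq> {A, B}"
    using infinite_comps_subset[of ?S 0] by (simp add: A_def B_def)
  ultimately have "inf_comps_minus E ?S = {A, B} \<and> A \<noteq> B" using AB by blast
  then show ?thesis by (simp only: card_2_iff) blast
qed

theorem two_ended: "two_ended E"
  unfolding two_ended_def
proof (intro conjI allI impI)
  show "\<exists>S. finite S \<and> card (inf_comps_minus E S) = 2"
    using deleting_a_layer_leaves_two_infinite_comps by (intro exI[of _ "{0} \<times> UNIV"]) simp
qed (simp_all add: connected finitely_many_infinite_comps)

end

lemma UNIV_10: "(UNIV :: 10 set) = {0, 1, 2, 3, 4, 5, 6, 7, 8, 9}"
proof -
  have "x \<in> {0, 1, 2, 3, 4, 5, 6, 7, 8, 9}" for x :: 10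
  proof (cases x)
    case (of_int z)
    then have "z \<in> {0, 1, 2, 3, 4, 5, 6, 7, 8, 9}" by (simp, presburger)
    then show ?thesis using of_int by auto
  qed
  then show ?thesis by blast
qed

lemma all10: "(\<forall>x::10. P x) \<longleftrightarrow> P 0 \<and> P 1 \<and> P 2 \<and> P 3 \<and> P 4 \<and> P 5 \<and> P 6 \<and> P 7 \<and> P 8 \<and> P 9"
  by (metis UNIV_10 UNIV_I empty_iff insert_iff)

lemma ex10: "(\<exists>x::10. P x) \<longleftrightarrow> P 0 \<or> P 1 \<or> P 2 \<or> P 3 \<or> P 4 \<or> P 5 \<or> P 6 \<or> P 7 \<or> P 8 \<or> P 9"
  using all10[of "\<lambda>x. \<not> P x"] by blast

lemma ten_mult: "10 * (y::10) = 0"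
proof -
  have "(10::10) = 0" by simp
  then show ?thesis by (simp only: mult_zero_left)
qed

definition odd10 :: "10 \<Rightarrow> bool" where
  "odd10 k \<longleftrightarrow> k = 1 \<or> k = 3 \<or> k = 5 \<or> k = 7 \<or> k = 9"

definition layer_next :: "int \<times> 10 \<Rightarrow> int \<times> 10" where
  "layer_next x = (fst x, snd x + 1)"

definition layer_prev :: "int \<times> 10 \<Rightarrow> int \<times> 10" where
  "layer_prev x = (fst x, snd x - 1)"

text \<open>For odd \<open>k\<close> we have \<open>3 * (2 * k) + 5 = k\<close>, so the even branch inverts the odd one.\<close>

definition rung :: "int \<times> 10 \<Rightarrow> int \<times> 10" where
  "rung x = (if odd10 (snd x) then (fst x + 1, 2 * snd x) else (fst x - 1, 3 * snd x + 5))"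

lemmas Gamma_simps = layer_next_def layer_prev_def rung_def odd10_def

lemma Gamma_iff: "Gamma x y \<longleftrightarrow> y = layer_next x \<or> y = layer_prev x \<or> y = rung x"
proof -
  have "\<forall>k k'::10. Gamma (n, k) (n', k') \<longleftrightarrow>
      (n', k') = layer_next (n, k) \<or> (n', k') = layer_prev (n, k) \<or> (n', k') = rung (n, k)" for n n'
    unfolding all10 by (simp add: Gamma_def Gamma_simps ex10) arith
  from this[of "fst x" "fst y"] show ?thesis by (cases x, cases y) simp
qed

lemma Gamma_neighbourhood: "{y. Gamma x y} = {layer_next x, layer_prev x, rung x}"
  by (auto simp: Gamma_iff)

lemma fst_rung: "fst (rung x) = fst x + 1 \<or> fst (rung x) = fst x - 1"
  by (simp add: rung_def)

lemma rung_rung: "rung (rung x) = x"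
proof -
  have "\<forall>k::10. rung (rung (n, k)) = (n, k)" for n
    unfolding all10 by (simp add: Gamma_simps)
  then show ?thesis by (cases x) auto
qed

lemma layer_neighbours_distinct:
  "layer_next x \<noteq> layer_prev x" "layer_next x \<noteq> rung x" "layer_prev x \<noteq> rung x"
proof -
  have "\<forall>k::10. k + 1 \<noteq> k - 1" unfolding all10 by simp
  then show "layer_next x \<noteq> layer_prev x" by (simp add: layer_next_def layer_prev_def)
  show "layer_next x \<noteq> rung x" "layer_prev x \<noteq> rung x"
    using fst_rung[of x] by (auto simp: layer_next_def layer_prev_def prod_eq_iff)
qed

lemma simple_graph_Gamma: "simple_graph Gamma"
proof -
  have "x \<noteq> rung x" for x using fst_rung[of x] by (auto simp: prod_eq_iff)
  then show ?thesis unfolding simple_graph_def Gamma_iff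
    by (auto simp: rung_rung layer_next_def layer_prev_def prod_eq_iff)
qed

lemma cubic_Gamma: "cubic Gamma"
  by (simp add: cubic_def Gamma_neighbourhood layer_neighbours_distinct)

lemma graph_autI_Gamma:
  assumes "bij f"
    and "\<And>x. {f (layer_next x), f (layer_prev x)} = {layer_next (f x), layer_prev (f x)}"
    and "\<And>x. f (rung x) = rung (f x)"
  shows "graph_aut Gamma f"
  using assms by (intro graph_autI_neighbourhoods) (simp_all add: Gamma_neighbourhood insert_commute)

definition reflect :: "int \<times> 10 \<Rightarrow> int \<times> 10" where
  "reflect x = (fst x, - snd x)"

lemma graph_aut_reflect: "graph_aut Gamma reflect"
proof (rule graph_autI_Gamma)
  show "bij reflect" by (rule o_bij[of reflect]) (auto simp: reflect_def)
  show "{reflect (layer_next x), reflect (layer_prev x)} = {layer_next (reflect x), layer_prev (reflect x)}" for x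
    by (auto simp: reflect_def layer_next_def layer_prev_def)
  have "\<forall>k::10. reflect (rung (n, k)) = rung (reflect (n, k))" for n
    unfolding all10 by (simp add: reflect_def Gamma_simps)
  then show "reflect (rung x) = rung (reflect x)" for x by (cases x) auto
qed

text \<open>The rung map doubles odd residues, so a shift by \<open>t\<close> on layer \<open>n\<close> must continue as a
  shift by \<open>2 * t\<close> on layer \<open>n + 1\<close>; on the even residues doubling has order 4.\<close>

definition twist :: "10 \<Rightarrow> int \<Rightarrow> 10" where
  "twist s n = s * 2 ^ nat (n mod 4)"

definition shift :: "int \<Rightarrow> 10 \<Rightarrow> int \<times> 10 \<Rightarrow> int \<times> 10" where
  "shift m s x = (fst x + m, snd x + 2 * twist s (fst x))"

lemma twist_succ: "2 * twist s (n + 1) = 2 * (2 * twist s n)"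
proof -
  have "n mod 4 = 0 \<and> (n + 1) mod 4 = 1 \<or> n mod 4 = 1 \<and> (n + 1) mod 4 = 2 \<or>
        n mod 4 = 2 \<and> (n + 1) mod 4 = 3 \<or> n mod 4 = 3 \<and> (n + 1) mod 4 = 0" by presburger
  moreover have "2 * (s * 1) = 2 * (2 * (s * 8))"
    using all10[of "\<lambda>s::10. 2 * (s * 1) = 2 * (2 * (s * 8))"] by simp
  ultimately show ?thesis unfolding twist_def by (elim disjE conjE) (simp_all add: algebra_simps)
qed

lemma twist_pred: "6 * twist s n = 2 * twist s (n - 1)"
proof -
  have "6 * twist s n = 3 * (2 * twist s (n - 1 + 1))" by simp
  also have "\<dots> = 2 * twist s (n - 1) + 10 * twist s (n - 1)"
    unfolding twist_succ by (simp add: algebra_simps)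
  finally show ?thesis by (simp only: ten_mult add_0_right)
qed

lemma odd10_add_even: "odd10 (k + 2 * t) \<longleftrightarrow> odd10 k"
proof -
  have "\<forall>k t::10. odd10 (k + 2 * t) \<longleftrightarrow> odd10 k" unfolding all10 by (simp add: odd10_def)
  then show ?thesis by blast
qed

lemma shift_rung: "shift m s (rung x) = rung (shift m s x)"
  using twist_succ[of s "fst x"] twist_pred[of s "fst x"]
  by (simp add: shift_def rung_def odd10_add_even algebra_simps)

lemma graph_aut_shift: "graph_aut Gamma (shift m s)"
proof (rule graph_autI_Gamma)
  show "bij (shift m s)"
    by (rule o_bij[where g = "\<lambda>x. (fst x - m, snd x - 2 * twist s (fst x - m))"])
      (auto simp: shift_def)
  show "{shift m s (layer_next x), shift m s (layer_prev x)} =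
        {layer_next (shift m s x), layer_prev (shift m s x)}" for x
    by (simp add: shift_def layer_next_def layer_prev_def algebra_simps)
qed (rule shift_rung)

definition flip_offset :: "int \<Rightarrow> 10" where
  "flip_offset n = 3 ^ nat (n mod 4)"

definition flip_sign :: "int \<Rightarrow> 10" where
  "flip_sign n = (- 1) ^ nat (n mod 2)"

definition flip :: "int \<times> 10 \<Rightarrow> int \<times> 10" where
  "flip x = (- fst x, flip_offset (fst x) + flip_sign (fst x) * snd x)"

lemma flip_offset_succ: "flip_offset (n + 1) = 3 * flip_offset n"
proof -
  have "n mod 4 = 0 \<and> (n + 1) mod 4 = 1 \<or> n mod 4 = 1 \<and> (n + 1) mod 4 = 2 \<or>
        n mod 4 = 2 \<and> (n + 1) mod 4 = 3 \<or> n mod 4 = 3 \<and> (n + 1) mod 4 = 0" by presburger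
  then show ?thesis unfolding flip_offset_def by (elim disjE conjE) simp_all
qed

lemma flip_sign_succ: "flip_sign (n + 1) = - flip_sign n"
proof -
  have "n mod 2 = 0 \<and> (n + 1) mod 2 = 1 \<or> n mod 2 = 1 \<and> (n + 1) mod 2 = 0" by presburger
  then show ?thesis unfolding flip_sign_def by (elim disjE conjE) simp_all
qed

lemma flip_offset_values: "flip_offset n \<in> {1, 3, 7, 9}"
proof -
  have "n mod 4 \<in> {0, 1, 2, 3}" by auto
  then show ?thesis unfolding flip_offset_def by auto
qed

lemma flip_sign_values: "flip_sign n \<in> {1, - 1}"
proof -
  have "n mod 2 \<in> {0, 1}" by auto
  then show ?thesis unfolding flip_sign_def by auto
qed

lemma flip_rung_residues:
  assumes "A \<in> {1, 3, 7, 9}" and "B \<in> {1, - 1}"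
  shows "odd10 k \<Longrightarrow> \<not> odd10 (A + B * k) \<and> 3 * A - B * (2 * k) = 3 * (A + B * k) + 5"
    and "\<not> odd10 k \<Longrightarrow> odd10 (3 * A - B * k) \<and> A + B * (3 * k + 5) = 2 * (3 * A - B * k)"
proof -
  have "\<forall>k::10. (odd10 k \<longrightarrow> \<not> odd10 (A + B * k) \<and> 3 * A - B * (2 * k) = 3 * (A + B * k) + 5) \<and>
      (\<not> odd10 k \<longrightarrow> odd10 (3 * A - B * k) \<and> A + B * (3 * k + 5) = 2 * (3 * A - B * k))"
    using assms unfolding all10 by (auto simp: odd10_def)
  then show "odd10 k \<Longrightarrow> \<not> odd10 (A + B * k) \<and> 3 * A - B * (2 * k) = 3 * (A + B * k) + 5"
    and "\<not> odd10 k \<Longrightarrow> odd10 (3 * A - B * k) \<and> A + B * (3 * k + 5) = 2 * (3 * A - B * k)"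
    by blast+
qed

lemma flip_rung: "flip (rung x) = rung (flip x)"
proof (cases "odd10 (snd x)")
  case True
  then show ?thesis
    using flip_rung_residues(1)[OF flip_offset_values flip_sign_values, of "snd x" "fst x" "fst x"]
    by (simp add: flip_def rung_def flip_offset_succ flip_sign_succ)
next
  case False
  let ?n = "fst x - 1"
  have "flip_offset (fst x) = 3 * flip_offset ?n" "flip_sign (fst x) = - flip_sign ?n"
    using flip_offset_succ[of ?n] flip_sign_succ[of ?n] by simp_all
  then show ?thesis
    using False flip_rung_residues(2)[OF flip_offset_values flip_sign_values, of "snd x" ?n ?n]
    by (simp add: flip_def rung_def)
qed

lemma graph_aut_flip: "graph_aut Gamma flip"
proof (rule graph_autI_Gamma)
  have sign_square: "flip_sign n * flip_sign n = 1" for n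
    using flip_sign_values[of n] by auto
  show "bij flip"
    by (rule o_bij[where g = "\<lambda>x. (- fst x, flip_sign (- fst x) * (snd x - flip_offset (- fst x)))"])
      (auto simp: flip_def algebra_simps sign_square mult.assoc[symmetric])
  show "{flip (layer_next x), flip (layer_prev x)} = {layer_next (flip x), layer_prev (flip x)}" for x
    using flip_sign_values[of "fst x"]
    by (auto simp: flip_def layer_next_def layer_prev_def algebra_simps)
qed (rule flip_rung)

text \<open>Multiplication by 6 fixes every even residue; this makes \<open>transport y\<close> hit \<open>y\<close>.\<close>

definition transport :: "int \<times> 10 \<Rightarrow> int \<times> 10 \<Rightarrow> int \<times> 10" where
  "transport y = (if odd10 (snd y) then shift (fst y) (3 * (snd y - 1)) \<circ> flip
                  else shift (fst y) (3 * snd y))"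

lemma graph_aut_transport: "graph_aut Gamma (transport y)"
  by (simp add: transport_def graph_aut_shift graph_aut_flip graph_aut_comp)

lemma transport_origin: "transport y (0, 0) = y" "transport y (- 1, 5) = rung y"
proof -
  have "\<forall>k::10. transport (m, k) (0, 0) = (m, k) \<and> transport (m, k) (- 1, 5) = rung (m, k)" for m
    unfolding all10
    by (simp add: transport_def shift_def twist_def flip_def flip_offset_def flip_sign_def Gamma_simps)
  then show "transport y (0, 0) = y" "transport y (- 1, 5) = rung y" by (cases y; simp)+
qed

lemma vertex_transitive_Gamma: "vertex_transitive Gamma"
  using graph_aut_transport transport_origin(1) by (blast intro: vertex_transitiveI_base)

lemma layer_neighbours_if_rung_preserved:
  assumes f: "graph_aut Gamma f" and "f (rung x) = rung (f x)"
  shows "{f (layer_next x), f (layer_prev x)} = {layer_next (f x), layer_prev (f x)}"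
proof -
  have "inj f" using f by (simp add: graph_aut_def bij_is_inj)
  then have "f ` {layer_next x, layer_prev x} = f ` {layer_next x, layer_prev x, rung x} - {f (rung x)}"
    using layer_neighbours_distinct[of x] by (auto simp: inj_eq)
  also have "\<dots> = {layer_next (f x), layer_prev (f x)}"
    using graph_aut_image_neighbourhood[OF f, of x] assms(2) layer_neighbours_distinct[of "f x"]
    by (auto simp: Gamma_neighbourhood)
  finally show ?thesis by simp
qed

lemma GammaE:
  assumes "Gamma x y"
  obtains "y = layer_next x" | "y = layer_prev x" | "y = rung x"
  using assms by (auto simp: Gamma_iff)

lemma Gamma_sym: "Gamma x y \<Longrightarrow> Gamma y x"
  using simple_graph_Gamma unfolding simple_graph_def by blast

lemma origin_neighbours:
  "layer_next (0, 0) = (0, 1)" "layer_prev (0, 0) = (0, 9)" "rung (0, 0) = (- 1, 5)"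
  by (simp_all add: Gamma_simps minus_equation_iff)

lemma reflect_values:
  "reflect (0, 0) = (0, 0)" "reflect (0, 1) = (0, 9)" "reflect (0, 9) = (0, 1)" "reflect (- 1, 5) = (- 1, 5)"
  by (simp_all add: reflect_def minus_equation_iff)

lemma three_octagons_at_layer_origin:
  "three_octagons Gamma (0, 1) (0, 0) (0, 9)" "three_octagons Gamma (0, 9) (0, 0) (0, 1)"
proof -
  let ?W = "{((0, 8), (0, 7), (1, 4), (1, 3), (1, 2)), ((0, 8), (- 1, 9), (- 1, 0), (- 1, 1), (0, 2)),
             ((1, 8), (1, 9), (1, 0), (1, 1), (1, 2))}
    :: ((int \<times> 10) \<times> (int \<times> 10) \<times> (int \<times> 10) \<times> (int \<times> 10) \<times> (int \<times> 10)) set"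
  have "?W \<subseteq> octagons Gamma (0, 1) (0, 0) (0, 9)" "card ?W = 3"
    by (simp_all add: octagons_def Gamma_iff Gamma_simps)
  then show "three_octagons Gamma (0, 1) (0, 0) (0, 9)" unfolding three_octagons_def by blast
  from three_octagons_graph_aut[OF graph_aut_reflect this]
  show "three_octagons Gamma (0, 9) (0, 0) (0, 1)" by (simp only: reflect_values)
qed

lemma octagons_at_rung_origin:
  "octagons Gamma (- 1, 5) (0, 0) (0, 1) \<subseteq>
     {((0, 2), (0, 3), (0, 4), (- 1, 7), (- 1, 6)), ((0, 2), (- 1, 1), (- 1, 2), (- 1, 3), (- 1, 4))}"
proof
  fix w assume "w \<in> octagons Gamma (- 1, 5) (0, 0) (0, 1)"
  moreover obtain w1 w2 w3 w4 w5 where w: "w = (w1, w2, w3, w4, w5)" by (cases w) auto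
  ultimately have "Gamma (0, 1) w1" "Gamma w1 w2" "Gamma w2 w3" "Gamma w3 w4" "Gamma w4 w5"
    "Gamma (- 1, 5) w5" "distinct [(- 1, 5), (0, 0), (0, 1), w1, w2, w3, w4, w5]"
    by (simp_all add: octagons_def Gamma_sym)
  then show "w \<in> {((0, 2), (0, 3), (0, 4), (- 1, 7), (- 1, 6)),
                 ((0, 2), (- 1, 1), (- 1, 2), (- 1, 3), (- 1, 4))}"
    unfolding w
    by - (erule GammaE[where y = w1]; simp add: Gamma_simps; erule GammaE[where x = "(- 1, 5)" and y = w5];
        simp add: Gamma_simps; erule GammaE[where y = w2]; simp add: Gamma_simps;
        erule GammaE[where y = w3]; simp add: Gamma_simps; erule GammaE[where y = w4];
        simp add: Gamma_simps Gamma_iff)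
qed

lemma not_three_octagons_at_rung_origin:
  assumes "l \<in> {(0, 1), (0, 9)}" shows "\<not> three_octagons Gamma (- 1, 5) (0, 0) l"
proof -
  have "\<not> three_octagons Gamma (- 1, 5) (0, 0) (0, 1)"
  proof
    assume "three_octagons Gamma (- 1, 5) (0, 0) (0, 1)"
    then obtain W where W: "W \<subseteq> octagons Gamma (- 1, 5) (0, 0) (0, 1)" "card W = 3"
      by (auto simp: three_octagons_def)
    from W(1) octagons_at_rung_origin have sub: "W \<subseteq> {((0, 2), (0, 3), (0, 4), (- 1, 7), (- 1, 6)),
        ((0, 2), (- 1, 1), (- 1, 2), (- 1, 3), (- 1, 4))}" by (rule subset_trans)
    have "card W \<le> 2" using card_mono[OF _ sub] by simp
    with W(2) show False by simp
  qed
  moreover from this have "\<not> three_octagons Gamma (- 1, 5) (0, 0) (0, 9)"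
    using three_octagons_graph_aut[OF graph_aut_reflect, of "(- 1, 5)" "(0, 0)" "(0, 9)"]
    unfolding reflect_values by blast
  ultimately show ?thesis using assms by blast
qed

lemma three_octagons_layer:
  "three_octagons Gamma (layer_next y) y (layer_prev y)"
  "three_octagons Gamma (layer_prev y) y (layer_next y)"
proof -
  let ?f = "transport y"
  have "?f (rung (0, 0)) = rung (?f (0, 0))"
    using transport_origin by (simp add: origin_neighbours)
  from layer_neighbours_if_rung_preserved[OF graph_aut_transport this]
  have "{?f (0, 1), ?f (0, 9)} = {layer_next y, layer_prev y}"
    by (simp add: origin_neighbours transport_origin)
  moreover have "three_octagons Gamma (?f (0, 1)) y (?f (0, 9))" "three_octagons Gamma (?f (0, 9)) y (?f (0, 1))"
    using three_octagons_at_layer_origin[THEN three_octagons_graph_aut[OF graph_aut_transport]]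
    by (simp_all add: transport_origin)
  ultimately show "three_octagons Gamma (layer_next y) y (layer_prev y)"
    "three_octagons Gamma (layer_prev y) y (layer_next y)"
    by (auto simp: doubleton_eq_iff)
qed

lemma not_three_octagons_rung:
  assumes "l \<in> {layer_next y, layer_prev y}" shows "\<not> three_octagons Gamma (rung y) y l"
proof
  assume three: "three_octagons Gamma (rung y) y l"
  let ?g = "inv (transport y)"
  have g: "graph_aut Gamma ?g" by (rule graph_aut_inv[OF graph_aut_transport])
  have "bij (transport y)" using graph_aut_transport by (simp add: graph_aut_def)
  then have g_y: "?g y = (0, 0)" "?g (rung y) = (- 1, 5)"
    using transport_origin by (metis bij_inv_eq_iff)+
  then have "?g (rung y) = rung (?g y)" by (simp add: origin_neighbours)
  from layer_neighbours_if_rung_preserved[OF g this]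
  have "?g l \<in> {(0, 1), (0, 9)}"
    using assms g_y(1) by (auto simp: origin_neighbours)
  moreover have "three_octagons Gamma (- 1, 5) (0, 0) (?g l)"
    using three_octagons_graph_aut[OF g three] g_y by simp
  ultimately show False using not_three_octagons_at_rung_origin by blast
qed

lemma graph_aut_Gamma_rung:
  assumes f: "graph_aut Gamma f" shows "f (rung y) = rung (f y)"
proof (rule ccontr)
  assume ne: "f (rung y) \<noteq> rung (f y)"
  have N: "f ` {layer_next y, layer_prev y, rung y} = {layer_next (f y), layer_prev (f y), rung (f y)}"
    using graph_aut_image_neighbourhood[OF f, of y] by (simp add: Gamma_neighbourhood)
  then have "rung (f y) \<in> {f (layer_next y), f (layer_prev y)}" using ne by auto
  then obtain z z' where zz': "{z, z'} = {layer_next y, layer_prev y}" "f z = rung (f y)"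
  proof (cases "rung (f y) = f (layer_next y)")
    case True
    then show ?thesis using that[of "layer_next y" "layer_prev y"] by simp
  next
    case False
    then show ?thesis using that[of "layer_prev y" "layer_next y"] \<open>rung (f y) \<in> _\<close>
      by (simp add: insert_commute)
  qed
  then have "z \<noteq> z'" using layer_neighbours_distinct(1)[of y] by auto
  moreover have "inj f" using f by (simp add: graph_aut_def bij_is_inj)
  ultimately have "f z' \<noteq> rung (f y)" using zz'(2) by (metis injD)
  moreover have "z' \<in> {layer_next y, layer_prev y, rung y}" using zz'(1) by blast
  then have "f z' \<in> {layer_next (f y), layer_prev (f y), rung (f y)}"
    unfolding N[symmetric] by (rule imageI)
  ultimately have "\<not> three_octagons Gamma (rung (f y)) (f y) (f z')"
    using not_three_octagons_rung by blast
  moreover have "three_octagons Gamma z y z'"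
    using zz'(1) three_octagons_layer[of y] by (auto simp: doubleton_eq_iff)
  then have "three_octagons Gamma (rung (f y)) (f y) (f z')"
    using three_octagons_graph_aut[OF f] zz'(2) by metis
  ultimately show False by blast
qed

lemma no_involution_swapping_origin_rung:
  assumes g: "graph_aut Gamma g" and g0: "g (0, 0) = (- 1, 5)" and inv: "\<And>x. g (g x) = x"
  shows False
proof -
  have R: "g (rung x) = rung (g x)" for x by (rule graph_aut_Gamma_rung[OF g])
  have L: "{g (layer_next x), g (layer_prev x)} = {layer_next (g x), layer_prev (g x)}" for x
    by (rule layer_neighbours_if_rung_preserved[OF g R])
  have rungs: "rung (0, 4) = (- 1, 7)" "rung (- 1, 9) = (0, 8)" "rung (- 1, 1) = (0, 2)"
    by (simp_all add: Gamma_simps)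
  have "{g (0, 1), g (0, 9)} = {(- 1, 6), (- 1, 4)}"
    using L[of "(0, 0)"] g0 unfolding origin_neighbours by (simp add: Gamma_simps)
  then consider "g (0, 1) = (- 1, 6)" | "g (0, 1) = (- 1, 4)" "g (0, 9) = (- 1, 6)"
    by (auto simp: doubleton_eq_iff)
  then show False
  proof cases
    case 1
    have "g (0, 2) = (- 1, 7)" using L[of "(0, 1)"] 1 g0 by (auto simp: Gamma_simps doubleton_eq_iff)
    moreover from this have "g (0, 3) = (- 1, 8)"
      using L[of "(0, 2)"] 1 by (auto simp: Gamma_simps doubleton_eq_iff)
    moreover from this have "g (0, 4) = (- 1, 9)"
      using L[of "(0, 3)"] \<open>g (0, 2) = _\<close> by (auto simp: Gamma_simps doubleton_eq_iff)
    ultimately have "g (- 1, 7) = (0, 2)" "g (- 1, 7) = (0, 8)"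
      using inv[of "(0, 2)"] R[of "(0, 4)"] by (simp_all add: rungs)
    then show False by simp
  next
    case 2
    have "layer_next (0, 9) = (0, 0)" by (simp add: layer_next_def)
    then have "g (0, 8) = (- 1, 7)"
      using L[of "(0, 9)"] 2 g0 by (simp only:) (auto simp: Gamma_simps doubleton_eq_iff)
    have "g (0, 2) = (- 1, 3)" using L[of "(0, 1)"] 2 g0 by (auto simp: Gamma_simps doubleton_eq_iff)
    moreover from this have "g (0, 3) = (- 1, 2)"
      using L[of "(0, 2)"] 2 by (auto simp: Gamma_simps doubleton_eq_iff)
    moreover from this have "g (0, 4) = (- 1, 1)"
      using L[of "(0, 3)"] \<open>g (0, 2) = _\<close> by (auto simp: Gamma_simps doubleton_eq_iff)
    ultimately have "g (- 1, 7) = (0, 8)" "g (- 1, 7) = (0, 2)"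
      using inv[of "(0, 8)"] R[of "(0, 4)"] \<open>g (0, 8) = _\<close> by (simp_all add: rungs)
    then show False by simp
  qed
qed

lemma not_cayley_graph_Gamma: "\<not> cayley_graph Gamma"
proof
  assume "cayley_graph Gamma"
  then obtain H where H: "aut_subgroup Gamma H" "acts_regularly H"
    unfolding cayley_graph_def by blast
  then obtain g where g: "g \<in> H" "g (0, 0) = (- 1, 5)"
    unfolding acts_regularly_def by blast
  then have aut: "graph_aut Gamma g" using H(1) by (simp add: aut_subgroup_def)
  have "g (g (0, 0)) = (0, 0)"
    using graph_aut_Gamma_rung[OF aut, of "(0, 0)"] g(2) by (simp add: origin_neighbours Gamma_simps)
  then have "g (g x) = x" for x by (rule acts_regularly_swap_involution[OF H g(1)])
  then show False using no_involution_swapping_origin_rung[OF aut g(2)] by blast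
qed

lemma walk_in_layer_Gamma:
  "(\<lambda>x y. Gamma x y \<and> fst x = n \<and> fst y = n)\<^sup>*\<^sup>* (n, k) (n, k + of_nat i)"
proof (induction i)
  case (Suc i)
  have "Gamma (n, k + of_nat i) (n, k + of_nat (Suc i))"
    by (simp add: Gamma_iff layer_next_def algebra_simps)
  with Suc show ?case by (simp add: rtranclp.rtrancl_into_rtrancl)
qed simp

interpretation Gamma: layered_graph Gamma
proof
  show "symp Gamma" by (auto intro: sympI Gamma_sym)
  show "\<bar>fst y - fst x\<bar> \<le> 1" if "Gamma x y" for x y
    using that fst_rung[of x] by (auto simp: Gamma_iff layer_next_def layer_prev_def)
  show "(\<lambda>x y. Gamma x y \<and> fst x = n \<and> fst y = n)\<^sup>*\<^sup>* (n, k) (n, k')" for n k k'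
  proof (cases "k' - k")
    case (of_int z)
    then have "k' = k + of_nat (nat z)" by (simp add: algebra_simps)
    then show ?thesis using walk_in_layer_Gamma by simp
  qed
  show "\<exists>k k'. Gamma (n, k) (n + 1, k')" for n
    by (intro exI[of _ 1] exI[of _ 2]) (simp add: Gamma_iff Gamma_simps)
qed

theorem theorem1p3:
  shows "simple_graph Gamma \<and> cubic Gamma \<and> two_ended Gamma \<and>
         vertex_transitive Gamma \<and> \<not> cayley_graph Gamma"
  using simple_graph_Gamma cubic_Gamma Gamma.two_ended vertex_transitive_Gamma not_cayley_graph_Gamma
  by blast

end
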